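(* Let $N\ge 3$, $h=1/N$, $\tau>0$, $\eta>0$, $\sigma\in\mathbb{R}$, and let $\mathbf{X}^m=(x^m,y^m)^T\in\mathbb{X}^h$ and $\kappa^m\in\mathbb{K}^h$ be given. Let $\widetilde{\mathbf{X}}^{m+1/2}\in\mathbb{X}^h$ be the predicted curve (obtained from $\mathbf{X}^m$ by one step of the ZJB scheme with time step $\tau/2$), let $\widetilde{\mathbf{h}}^{m+1/2}_j=\widetilde{\mathbf{X}}^{m+1/2}(\rho_j)-\widetilde{\mathbf{X}}^{m+1/2}(\rho_{j-1})$ for $j=1,\dots,N$, and let $\widetilde{\mathbf{n}}^{m+1/2}_j=(\widetilde n^{m+1/2}_{j,1},\widetilde n^{m+1/2}_{j,2})^T$ be the unit normal of $\widetilde{\mathbf{X}}^{m+1/2}$ on $I_j$. Assume (i) $(\widetilde n^{m+1/2}_{1,1})^2+(\widetilde n^{m+1/2}_{N,1})^2>0$, and (ii) $\min_{1\le j\le N}|\widetilde{\mathbf{h}}^{m+1/2}_j|>0$. Then the linear system (PC-ZJB scheme): find $\mathbf{X}^{m+1}=(x^{m+1},y^{m+1})^T\in\mathbb{X}^h$ and $\kappa^{m+1}\in\mathbb{K}^h$ such that $$\Big\langle \tfrac{\mathbf{X}^{m+1}-\mathbf{X}^m}{\tau},\widetilde{\mathbf{n}}^{m+1/2}\psi^h\Big\rangle^h_{\widetilde\Gamma^{m+1/2}}+\Big\langle \partial_s\big(\tfrac{\kappa^{m+1}+\kappa^m}{2}\big),\partial_s\psi^h\Big\rangle_{\widetilde\Gamma^{m+1/2}}=0\quad\forall\psi^h\in\mathbb{K}^h,$$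 $$\Big\langle \tfrac{\kappa^{m+1}+\kappa^m}{2}\widetilde{\mathbf{n}}^{m+1/2},\boldsymbol\omega^h\Big\rangle^h_{\widetilde\Gamma^{m+1/2}}-\Big\langle \partial_s\big(\tfrac{\mathbf{X}^{m+1}+\mathbf{X}^m}{2}\big),\partial_s\boldsymbol\omega^h\Big\rangle_{\widetilde\Gamma^{m+1/2}}+\sigma[\omega^h_1(1)-\omega^h_1(0)]$$ $$-\frac{1}{\eta\tau}\Big[\big(x^{m+1}(0)-x^m(0)\big)\omega_1^h(0)+\big(x^{m+1}(1)-x^m(1)\big)\omega_1^h(1)\Big]=0\quad\forall\boldsymbol\omega^h=(\omega^h_1,\omega^h_2)^T\in\mathbb{X}^h,$$ is well-posed, i.e., it has a unique solution $(\mathbf{X}^{m+1},\kappa^{m+1})\in\mathbb{X}^h\times\mathbb{K}^h$.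
   Context: Mesh: $\rho_j=jh$, $j=0,\dots,N$, $I_j=[\rho_{j-1},\rho_j]$. $\mathbb{K}^h$ is the space of continuous functions on $[0,1]$ that are affine on each $I_j$; $\mathbb{K}^h_0=\{\psi\in\mathbb{K}^h:\psi(0)=\psi(1)=0\}$; $\mathbb{X}^h=\mathbb{K}^h\times\mathbb{K}^h_0$ (polygonal open curves with both endpoints on the $x$-axis). For a curve $\mathbf{Y}\in\mathbb{X}^h$ with $\mathbf{h}_j=\mathbf{Y}(\rho_j)-\mathbf{Y}(\rho_{j-1})\neq 0$, define on $I_j$: the unit normal $\mathbf{n}|_{I_j}=\big(-(\mathbf{h}_j)_2,(\mathbf{h}_j)_1\big)^T/|\mathbf{h}_j|$ and the arc-length derivative $\partial_s f|_{I_j}=h\,\partial_\rho f|_{I_j}/|\mathbf{h}_j|$. Inner products on $\mathbf{Y}$: $\langle u,v\rangle_{\mathbf{Y}}=\int_0^1 u\cdot v\,|\partial_\rho\mathbf{Y}|\,d\rho$, and the mass-lumped product $\langle u,v\rangle^h_{\mathbf{Y}}=\frac12\sum_{j=1}^N|\mathbf{h}_j|\big[(u\cdot v)(\rho_j^-)+(u\cdot v)(\rho_{j-1}^+)\big]$, where $u(\rho_j^\pm)$ are one-sided limits. $\widetilde\Gamma^{m+1/2}$ denotes the curve $\widetilde{\mathbf{X}}^{m+1/2}$ and all normals/derivatives/inner products with subscript $\widetilde\Gamma^{m+1/2}$ are taken with respect to it. The ZJB scheme with step $\delta$ from $\mathbf{X}^m$ (with normal $\mathbf{n}^m$ of $\Gamma^m=\mathbf{X}^m$)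 finds $(\mathbf{X}^{new},\kappa^{new})\in\mathbb{X}^h\times\mathbb{K}^h$ with $\langle(\mathbf{X}^{new}-\mathbf{X}^m)/\delta,\mathbf{n}^m\psi\rangle^h_{\Gamma^m}+\langle\partial_s\kappa^{new},\partial_s\psi\rangle_{\Gamma^m}=0$ for all $\psi\in\mathbb{K}^h$ and $\langle\kappa^{new}\mathbf{n}^m,\boldsymbol\omega\rangle^h_{\Gamma^m}-\langle\partial_s\mathbf{X}^{new},\partial_s\boldsymbol\omega\rangle_{\Gamma^m}-\frac{1}{\eta\delta}[(x^{new}(0)-x^m(0))\omega_1(0)+(x^{new}(1)-x^m(1))\omega_1(1)]+\sigma[\omega_1(1)-\omega_1(0)]=0$ for all $\boldsymbol\omega\in\mathbb{X}^h$. This models solid-state dewetting (surface diffusion of an open curve with contact points moving on the substrate, $\eta$ the contact line mobility, $\sigma=\cos\theta_i$ with Young angle $\theta_i$). *)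

theory Defs
  imports Complex_Main
begin

(* Finite element functions are represented by their nodal values.
   A function of K^h (continuous, affine on each I_j = [rho_{j-1}, rho_j]) is uniquely
   determined by its values at rho_0, ..., rho_N; we store them as f :: nat => real
   with f j = value at rho_j = j/N, and normalise f j = 0 for j > N. *)

definition Kh :: "nat \<Rightarrow> (nat \<Rightarrow> real) set" where
  "Kh N = {f. \<forall>j>N. f j = 0}"

definition Kh0 :: "nat \<Rightarrow> (nat \<Rightarrow> real) set" where
  "Kh0 N = {f \<in> Kh N. f 0 = 0 \<and> f N = 0}"

definition Xh :: "nat \<Rightarrow> ((nat \<Rightarrow> real) \<times> (nat \<Rightarrow> real)) set" where
  "Xh N = Kh N \<times> Kh0 N"

definition seglen :: "(nat \<Rightarrow> real) \<Rightarrow> (nat \<Rightarrow> real) \<Rightarrow> nat \<Rightarrow> real" where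
  "seglen x y j = sqrt ((x j - x (j - 1))^2 + (y j - y (j - 1))^2)"

definition nrm1 :: "(nat \<Rightarrow> real) \<Rightarrow> (nat \<Rightarrow> real) \<Rightarrow> nat \<Rightarrow> real" where
  "nrm1 x y j = - (y j - y (j - 1)) / seglen x y j"

definition nrm2 :: "(nat \<Rightarrow> real) \<Rightarrow> (nat \<Rightarrow> real) \<Rightarrow> nat \<Rightarrow> real" where
  "nrm2 x y j = (x j - x (j - 1)) / seglen x y j"

(* arc-length derivative on I_j of f in K^h: h * d_rho f / |h_j| = (f_j - f_{j-1}) / |h_j| *)
definition ds :: "(nat \<Rightarrow> real) \<Rightarrow> (nat \<Rightarrow> real) \<Rightarrow> (nat \<Rightarrow> real) \<Rightarrow> nat \<Rightarrow> real" where
  "ds x y f j = (f j - f (j - 1)) / seglen x y j"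

(* <u,v>_Y for a product u.v that is constant (= p j) on each I_j:
   int_{I_j} p j |d_rho Y| d rho = p j * |h_j| *)
definition ip_pc :: "nat \<Rightarrow> (nat \<Rightarrow> real) \<Rightarrow> (nat \<Rightarrow> real) \<Rightarrow> (nat \<Rightarrow> real) \<Rightarrow> real" where
  "ip_pc N x y p = (\<Sum>j=1..N. p j * seglen x y j)"

(* mass-lumped product <u,v>^h_Y, where q j k = (u.v)(rho_k) evaluated as one-sided limit
   from inside element I_j (k = j or k = j-1) *)
definition ip_lump :: "nat \<Rightarrow> (nat \<Rightarrow> real) \<Rightarrow> (nat \<Rightarrow> real) \<Rightarrow> (nat \<Rightarrow> nat \<Rightarrow> real) \<Rightarrow> real" where
  "ip_lump N x y q = (1/2) * (\<Sum>j=1..N. seglen x y j * (q j j + q j (j - 1)))"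

definition zjb_step ::
  "nat \<Rightarrow> real \<Rightarrow> real \<Rightarrow> real \<Rightarrow> (nat \<Rightarrow> real) \<Rightarrow> (nat \<Rightarrow> real)
    \<Rightarrow> (nat \<Rightarrow> real) \<Rightarrow> (nat \<Rightarrow> real) \<Rightarrow> (nat \<Rightarrow> real) \<Rightarrow> bool" where
  "zjb_step N \<delta> \<eta> \<sigma> xm ym xn yn kn \<longleftrightarrow>
     (xn, yn) \<in> Xh N \<and> kn \<in> Kh N \<and>
     (\<forall>\<psi>\<in>Kh N.
        ip_lump N xm ym (\<lambda>j k. ((xn k - xm k) / \<delta> * nrm1 xm ym j
                               + (yn k - ym k) / \<delta> * nrm2 xm ym j) * \<psi> k)
      + ip_pc N xm ym (\<lambda>j. ds xm ym kn j * ds xm ym \<psi> j) = 0) \<and>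
     (\<forall>\<omega>1 \<omega>2. (\<omega>1, \<omega>2) \<in> Xh N \<longrightarrow>
        ip_lump N xm ym (\<lambda>j k. kn k * (nrm1 xm ym j * \<omega>1 k + nrm2 xm ym j * \<omega>2 k))
      - ip_pc N xm ym (\<lambda>j. ds xm ym xn j * ds xm ym \<omega>1 j + ds xm ym yn j * ds xm ym \<omega>2 j)
      - 1 / (\<eta> * \<delta>) * ((xn 0 - xm 0) * \<omega>1 0 + (xn N - xm N) * \<omega>1 N)
      + \<sigma> * (\<omega>1 N - \<omega>1 0) = 0)"

definition pc_zjb ::
  "nat \<Rightarrow> real \<Rightarrow> real \<Rightarrow> real \<Rightarrow> (nat \<Rightarrow> real) \<Rightarrow> (nat \<Rightarrow> real) \<Rightarrow> (nat \<Rightarrow> real)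
    \<Rightarrow> (nat \<Rightarrow> real) \<Rightarrow> (nat \<Rightarrow> real)
    \<Rightarrow> (nat \<Rightarrow> real) \<Rightarrow> (nat \<Rightarrow> real) \<Rightarrow> (nat \<Rightarrow> real) \<Rightarrow> bool" where
  "pc_zjb N \<tau> \<eta> \<sigma> xm ym km xt yt xn yn kn \<longleftrightarrow>
     (xn, yn) \<in> Xh N \<and> kn \<in> Kh N \<and>
     (\<forall>\<psi>\<in>Kh N.
        ip_lump N xt yt (\<lambda>j k. ((xn k - xm k) / \<tau> * nrm1 xt yt j
                               + (yn k - ym k) / \<tau> * nrm2 xt yt j) * \<psi> k)
      + ip_pc N xt yt (\<lambda>j. ds xt yt (\<lambda>i. (kn i + km i) / 2) j * ds xt yt \<psi> j) = 0) \<and>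
     (\<forall>\<omega>1 \<omega>2. (\<omega>1, \<omega>2) \<in> Xh N \<longrightarrow>
        ip_lump N xt yt (\<lambda>j k. (kn k + km k) / 2 * (nrm1 xt yt j * \<omega>1 k + nrm2 xt yt j * \<omega>2 k))
      - ip_pc N xt yt (\<lambda>j. ds xt yt (\<lambda>i. (xn i + xm i) / 2) j * ds xt yt \<omega>1 j
                          + ds xt yt (\<lambda>i. (yn i + ym i) / 2) j * ds xt yt \<omega>2 j)
      + \<sigma> * (\<omega>1 N - \<omega>1 0)
      - 1 / (\<eta> * \<tau>) * ((xn 0 - xm 0) * \<omega>1 0 + (xn N - xm N) * \<omega>1 N) = 0)"

end

theory Submission
  imports Defs "Jordan_Normal_Form.Determinant"
begin

text \<open>
  The corrector is a square linear system: unknowns and test functions both range over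
  \<open>X\<^sup>h \<times> K\<^sup>h\<close>, a space of dimension \<open>3N + 1\<close>. So it suffices to show that the homogeneous
  system (\<open>X\<^sup>m = 0\<close>, \<open>\<kappa>\<^sup>m = 0\<close>, \<open>\<sigma> = 0\<close>) has only the trivial solution.
  Testing it with \<open>\<psi> = \<kappa>\<close> and \<open>\<omega> = X\<close> and eliminating the coupling term gives
  \<open>\<tau>/2 |\<partial>\<^sub>s\<kappa>|\<^sup>2 + |\<partial>\<^sub>sX|\<^sup>2 + 2/(\<eta>\<tau>) (x(0)\<^sup>2 + x(1)\<^sup>2) = 0\<close>, where the norms are taken
  on the predicted curve. Hence \<open>X\<close> is constant with \<open>x(0) = 0\<close> and \<open>y(0) = 0\<close>, so \<open>X = 0\<close>, and
  \<open>\<kappa>\<close> is a constant \<open>c\<close>. Testing with \<open>\<omega> = (\<phi>\<^sub>0, 0)\<close> and \<open>\<omega> = (\<phi>\<^sub>N, 0)\<close> leaves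
  \<open>c n\<^sub>1\<^sub>,\<^sub>1 = c n\<^sub>N\<^sub>,\<^sub>1 = 0\<close>, and assumption (i) forces \<open>c = 0\<close>.
\<close>

definition linear_functional :: "((nat \<Rightarrow> real) \<Rightarrow> real) \<Rightarrow> bool" where
  "linear_functional L \<longleftrightarrow> (\<forall>a b u v. L (\<lambda>i. a * u i + b * v i) = a * L u + b * L v)"

definition hat :: "nat \<Rightarrow> nat \<Rightarrow> real" where
  "hat j = (\<lambda>i. if i = j then 1 else 0)"

lemma hat_in_Kh: "j \<le> N \<Longrightarrow> hat j \<in> Kh N"
  by (simp add: Kh_def hat_def)

lemma Kh_hat_expansion: "f \<in> Kh N \<Longrightarrow> f = (\<lambda>i. \<Sum>j\<le>N. f j * hat j i)"
  by (auto simp: Kh_def hat_def fun_eq_iff if_distrib sum.delta cong: if_cong)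

lemma linear_functional_zero:
  assumes "linear_functional L"
  shows "L (\<lambda>_. 0) = 0"
  using assms[unfolded linear_functional_def, rule_format, of 0 _ 0] by simp

lemma linear_functional_diff:
  assumes "linear_functional L"
  shows "L (\<lambda>i. f i - g i) = L f - L g"
  using assms[unfolded linear_functional_def, rule_format, of 1 f "-1" g] by simp

lemma linear_functional_sum:
  assumes "linear_functional L" and "finite J"
  shows "L (\<lambda>i. \<Sum>j\<in>J. c j * f j i) = (\<Sum>j\<in>J. c j * L (f j))"
  using assms(2)
proof (induction J rule: finite_induct)
  case empty
  then show ?case using linear_functional_zero[OF assms(1)] by simp
next
  case (insert j J)
  then show ?case
    using assms(1)[unfolded linear_functional_def, rule_format, of "c j" "f j" 1] by simp
qed

lemma linear_functional_Kh_expansion: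
  assumes "linear_functional L" and "f \<in> Kh N"
  shows "L f = (\<Sum>j\<le>N. f j * L (hat j))"
  by (subst Kh_hat_expansion[OF assms(2)]) (simp add: linear_functional_sum[OF assms(1)])

lemma square_mat_solvable_if_kernel_trivial:
  fixes A :: "'a :: field mat"
  assumes A: "A \<in> carrier_mat n n"
    and kernel: "\<And>v. v \<in> carrier_vec n \<Longrightarrow> A *\<^sub>v v = 0\<^sub>v n \<Longrightarrow> v = 0\<^sub>v n"
    and b: "b \<in> carrier_vec n"
  shows "\<exists>x \<in> carrier_vec n. A *\<^sub>v x = b"
proof -
  have "det A \<noteq> 0"
    using det_0_iff_vec_prod_zero_field[OF A] kernel by blast
  then have "A \<in> Units (ring_mat TYPE('a) n ())"
    by (rule det_non_zero_imp_unit[OF A])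
  then obtain B where B: "B \<in> carrier_mat n n" "A * B = 1\<^sub>m n"
    unfolding Units_def ring_mat_def by auto
  have "A *\<^sub>v (B *\<^sub>v b) = b"
    using A B b by (simp add: assoc_mult_mat_vec[symmetric])
  with B(1) b show ?thesis
    by (intro bexI[of _ "B *\<^sub>v b"]) auto
qed

text \<open>Here and in the next lemma \<^term>\<open>Kh m\<close> serves as the coordinate space \<open>\<real>\<^sup>m\<^sup>+\<^sup>1\<close>.\<close>

lemma injective_linear_system_solvable:
  fixes L :: "nat \<Rightarrow> (nat \<Rightarrow> real) \<Rightarrow> real"
  assumes lin: "\<And>k. k \<le> m \<Longrightarrow> linear_functional (L k)"
    and inj: "\<And>u. u \<in> Kh m \<Longrightarrow> (\<And>k. k \<le> m \<Longrightarrow> L k u = 0) \<Longrightarrow> u = (\<lambda>_. 0)"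
  shows "\<exists>u \<in> Kh m. \<forall>k \<le> m. L k u = b k"
proof -
  define n where "n = Suc m"
  define A where "A = mat n n (\<lambda>(k, j). L k (hat j))"
  define fun_of :: "real vec \<Rightarrow> nat \<Rightarrow> real" where "fun_of v = (\<lambda>j. if j < n then v $ j else 0)" for v
  have A: "A \<in> carrier_mat n n" by (simp add: A_def)
  have fun_of_Kh: "fun_of v \<in> Kh m" for v by (simp add: Kh_def fun_of_def n_def)
  have A_mult: "A *\<^sub>v v = vec n (\<lambda>k. L k (fun_of v))" if "v \<in> carrier_vec n" for v
  proof (rule eq_vecI)
    fix k assume "k < dim_vec (vec n (\<lambda>k. L k (fun_of v)))"
    then have k: "k < n" by simp
    have "L k (fun_of v) = (\<Sum>j\<le>m. fun_of v j * L k (hat j))"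
      using k by (intro linear_functional_Kh_expansion lin fun_of_Kh) (simp add: n_def)
    also have "\<dots> = (\<Sum>j<n. L k (hat j) * v $ j)"
      by (auto simp: n_def fun_of_def lessThan_Suc_atMost intro!: sum.cong)
    finally show "(A *\<^sub>v v) $ k = vec n (\<lambda>k. L k (fun_of v)) $ k"
      using k that by (simp add: A_def scalar_prod_def atLeast0LessThan)
  qed (use A in simp)
  have kernel: "v = 0\<^sub>v n" if v: "v \<in> carrier_vec n" "A *\<^sub>v v = 0\<^sub>v n" for v
  proof -
    have "L k (fun_of v) = 0" if "k \<le> m" for k
      using arg_cong[OF A_mult[OF v(1)], of "\<lambda>w. w $ k"] v(2) that by (simp add: n_def)
    then have "fun_of v = (\<lambda>_. 0)" by (intro inj fun_of_Kh)
    then have "v $ j = 0" if "j < n" for j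
    proof -
      have "fun_of v j = 0" using \<open>fun_of v = (\<lambda>_. 0)\<close> by simp
      with that show ?thesis by (simp add: fun_of_def)
    qed
    then show ?thesis
      using v(1) by (intro eq_vecI) auto
  qed
  obtain x where x: "x \<in> carrier_vec n" "A *\<^sub>v x = vec n b"
    using square_mat_solvable_if_kernel_trivial[OF A kernel, of "vec n b"] by auto
  then have "vec n (\<lambda>k. L k (fun_of x)) = vec n b"
    using A_mult by simp
  then have "\<forall>k \<le> m. L k (fun_of x) = b k"
    by (metis index_vec le_imp_less_Suc n_def)
  with fun_of_Kh show ?thesis by blast
qed

lemma nondegenerate_bilinear_system_unique_solvable:
  fixes B :: "(nat \<Rightarrow> real) \<Rightarrow> (nat \<Rightarrow> real) \<Rightarrow> real"
  assumes left: "\<And>v. linear_functional (\<lambda>u. B u v)"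
    and right: "\<And>u. linear_functional (B u)"
    and load: "linear_functional F"
    and nondeg: "\<And>u. u \<in> Kh m \<Longrightarrow> (\<And>v. v \<in> Kh m \<Longrightarrow> B u v = 0) \<Longrightarrow> u = (\<lambda>_. 0)"
  shows "\<exists>!u. u \<in> Kh m \<and> (\<forall>v \<in> Kh m. B u v = F v)"
proof -
  have vanish: "u = (\<lambda>_. 0)" if "u \<in> Kh m" "\<And>k. k \<le> m \<Longrightarrow> B u (hat k) = 0" for u
  proof (rule nondeg[OF that(1)])
    fix v assume "v \<in> Kh m"
    then show "B u v = 0"
      using linear_functional_Kh_expansion[OF right, of v m u] that(2) by simp
  qed
  have "\<exists>u \<in> Kh m. \<forall>k \<le> m. B u (hat k) = F (hat k)"
    by (rule injective_linear_system_solvable) (auto intro: left vanish)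
  then obtain u where u: "u \<in> Kh m" "\<And>k. k \<le> m \<Longrightarrow> B u (hat k) = F (hat k)"
    by blast
  have sol: "B u v = F v" if "v \<in> Kh m" for v
    unfolding linear_functional_Kh_expansion[OF right that] linear_functional_Kh_expansion[OF load that]
    using u(2) by simp
  have "u' = u" if "u' \<in> Kh m" "\<forall>v \<in> Kh m. B u' v = F v" for u'
  proof -
    have "(\<lambda>i. u' i - u i) = (\<lambda>_. 0)"
    proof (rule nondeg)
      show "(\<lambda>i. u' i - u i) \<in> Kh m" using that(1) u(1) by (simp add: Kh_def)
      show "B (\<lambda>i. u' i - u i) v = 0" if "v \<in> Kh m" for v
        using that \<open>\<forall>v \<in> Kh m. B u' v = F v\<close> sol linear_functional_diff[OF left[of v], of u' u]
        by simp
    qed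
    then show ?thesis by (simp add: fun_eq_iff)
  qed
  with u(1) sol show ?thesis by blast
qed

definition mass_normal ::
  "nat \<Rightarrow> (nat \<Rightarrow> real) \<Rightarrow> (nat \<Rightarrow> real) \<Rightarrow> (nat \<Rightarrow> real) \<Rightarrow> (nat \<Rightarrow> real) \<Rightarrow> (nat \<Rightarrow> real) \<Rightarrow> real"
  where "mass_normal N x y u v \<psi> = ip_lump N x y (\<lambda>j k. (u k * nrm1 x y j + v k * nrm2 x y j) * \<psi> k)"

definition stiffness :: "nat \<Rightarrow> (nat \<Rightarrow> real) \<Rightarrow> (nat \<Rightarrow> real) \<Rightarrow> (nat \<Rightarrow> real) \<Rightarrow> (nat \<Rightarrow> real) \<Rightarrow> real"
  where "stiffness N x y f g = ip_pc N x y (\<lambda>j. ds x y f j * ds x y g j)"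

lemma mass_normal_lincomb_left:
  "mass_normal N x y (\<lambda>i. a * u i + b * u' i) (\<lambda>i. a * v i + b * v' i) \<psi>
     = a * mass_normal N x y u v \<psi> + b * mass_normal N x y u' v' \<psi>"
  unfolding mass_normal_def ip_lump_def
  by (simp add: sum_distrib_left sum.distrib[symmetric] algebra_simps)

lemma mass_normal_lincomb_right:
  "mass_normal N x y u v (\<lambda>i. a * \<psi> i + b * \<psi>' i)
     = a * mass_normal N x y u v \<psi> + b * mass_normal N x y u v \<psi>'"
  unfolding mass_normal_def ip_lump_def
  by (simp add: sum_distrib_left sum.distrib[symmetric] algebra_simps)

lemma ds_lincomb: "ds x y (\<lambda>i. a * f i + b * f' i) j = a * ds x y f j + b * ds x y f' j"
  unfolding ds_def by (simp add: algebra_simps add_divide_distrib diff_divide_distrib)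

lemma stiffness_lincomb_left:
  "stiffness N x y (\<lambda>i. a * f i + b * f' i) g = a * stiffness N x y f g + b * stiffness N x y f' g"
  unfolding stiffness_def ip_pc_def ds_lincomb
  by (simp add: sum_distrib_left sum.distrib[symmetric] algebra_simps)

lemma stiffness_commute: "stiffness N x y f g = stiffness N x y g f"
  unfolding stiffness_def by (simp add: mult.commute)

lemma stiffness_lincomb_right:
  "stiffness N x y f (\<lambda>i. a * g i + b * g' i) = a * stiffness N x y f g + b * stiffness N x y f g'"
  by (simp add: stiffness_commute[of N x y f] stiffness_lincomb_left)

lemma mass_normal_zero [simp]:
  "mass_normal N x y (\<lambda>_. 0) (\<lambda>_. 0) \<psi> = 0"
  "mass_normal N x y u v (\<lambda>_. 0) = 0"
  by (simp_all add: mass_normal_def ip_lump_def)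

lemma stiffness_zero [simp]:
  "stiffness N x y (\<lambda>_. 0) g = 0"
  "stiffness N x y f (\<lambda>_. 0) = 0"
  by (simp_all add: stiffness_def ip_pc_def ds_def)

lemma seglen_nonneg: "seglen x y j \<ge> 0"
  by (simp add: seglen_def)

lemma stiffness_self_nonneg: "stiffness N x y f f \<ge> 0"
  unfolding stiffness_def ip_pc_def by (simp add: sum_nonneg seglen_nonneg)

lemma stiffness_self_eq_0_imp_const:
  assumes seg: "\<And>j. j \<in> {1..N} \<Longrightarrow> seglen x y j > 0"
    and "stiffness N x y f f = 0" and "j \<le> N"
  shows "f j = f 0"
proof -
  have sq: "ds x y f j * ds x y f j * seglen x y j = 0" if "j \<in> {1..N}" for j
    using assms(2) that sum_nonneg_eq_0_iff[of "{1..N}" "\<lambda>j. ds x y f j * ds x y f j * seglen x y j"]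
    by (simp add: stiffness_def ip_pc_def seglen_nonneg)
  have ds0: "ds x y f j = 0" if "j \<in> {1..N}" for j
    using sq[OF that] seg[OF that] by simp
  have step: "f j = f (j - 1)" if "j \<in> {1..N}" for j
    using ds0[OF that] seg[OF that] by (simp add: ds_def)
  from \<open>j \<le> N\<close> show ?thesis
  proof (induction j)
    case (Suc j)
    then show ?case using step[of "Suc j"] by simp
  qed simp
qed

lemma mass_normal_hat_first:
  assumes "N \<ge> 1"
  shows "mass_normal N x y (hat 0) (\<lambda>_. 0) \<psi> = seglen x y 1 * nrm1 x y 1 * \<psi> 0 / 2"
proof -
  have "(\<Sum>j=1..N. seglen x y j * ((hat 0 j * nrm1 x y j) * \<psi> j + (hat 0 (j - 1) * nrm1 x y j) * \<psi> (j - 1)))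
      = (\<Sum>j=1..N. if j = 1 then seglen x y 1 * nrm1 x y 1 * \<psi> 0 else 0)"
    by (rule sum.cong) (auto simp: hat_def)
  then show ?thesis
    using assms by (simp add: mass_normal_def ip_lump_def)
qed

lemma mass_normal_hat_last:
  assumes "N \<ge> 1"
  shows "mass_normal N x y (hat N) (\<lambda>_. 0) \<psi> = seglen x y N * nrm1 x y N * \<psi> N / 2"
proof -
  have "(\<Sum>j=1..N. seglen x y j * ((hat N j * nrm1 x y j) * \<psi> j + (hat N (j - 1) * nrm1 x y j) * \<psi> (j - 1)))
      = (\<Sum>j=1..N. if j = N then seglen x y N * nrm1 x y N * \<psi> N else 0)"
    by (rule sum.cong) (auto simp: hat_def)
  then show ?thesis
    using assms by (simp add: mass_normal_def ip_lump_def)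
qed

text \<open>
  The two equations of the corrector, tested with \<open>(\<omega>1, \<omega>2)\<close> and \<open>\<psi>\<close> respectively, are added
  and split into the part \<^term>\<open>pc_form\<close>, bilinear in the unknowns \<open>(X, Y, K)\<close> and the
  test functions, and the data \<^term>\<open>pc_load\<close>.
\<close>

definition pc_form ::
  "nat \<Rightarrow> real \<Rightarrow> real \<Rightarrow> (nat \<Rightarrow> real) \<Rightarrow> (nat \<Rightarrow> real)
    \<Rightarrow> (nat \<Rightarrow> real) \<Rightarrow> (nat \<Rightarrow> real) \<Rightarrow> (nat \<Rightarrow> real)
    \<Rightarrow> (nat \<Rightarrow> real) \<Rightarrow> (nat \<Rightarrow> real) \<Rightarrow> (nat \<Rightarrow> real) \<Rightarrow> real"
  where "pc_form N \<tau> \<eta> xt yt X Y K \<omega>1 \<omega>2 \<psi> =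
    mass_normal N xt yt X Y \<psi> / \<tau> + stiffness N xt yt K \<psi> / 2
    + mass_normal N xt yt \<omega>1 \<omega>2 K / 2 - (stiffness N xt yt X \<omega>1 + stiffness N xt yt Y \<omega>2) / 2
    - (X 0 * \<omega>1 0 + X N * \<omega>1 N) / (\<eta> * \<tau>)"

definition pc_load ::
  "nat \<Rightarrow> real \<Rightarrow> real \<Rightarrow> real \<Rightarrow> (nat \<Rightarrow> real) \<Rightarrow> (nat \<Rightarrow> real)
    \<Rightarrow> (nat \<Rightarrow> real) \<Rightarrow> (nat \<Rightarrow> real) \<Rightarrow> (nat \<Rightarrow> real)
    \<Rightarrow> (nat \<Rightarrow> real) \<Rightarrow> (nat \<Rightarrow> real) \<Rightarrow> (nat \<Rightarrow> real) \<Rightarrow> real"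
  where "pc_load N \<tau> \<eta> \<sigma> xt yt xm ym km \<omega>1 \<omega>2 \<psi> =
    mass_normal N xt yt xm ym \<psi> / \<tau> - stiffness N xt yt km \<psi> / 2
    - mass_normal N xt yt \<omega>1 \<omega>2 km / 2 + (stiffness N xt yt xm \<omega>1 + stiffness N xt yt ym \<omega>2) / 2
    - \<sigma> * (\<omega>1 N - \<omega>1 0) - (xm 0 * \<omega>1 0 + xm N * \<omega>1 N) / (\<eta> * \<tau>)"

lemma pc_form_lincomb_unknown:
  "pc_form N \<tau> \<eta> xt yt (\<lambda>i. a * X i + b * X' i) (\<lambda>i. a * Y i + b * Y' i) (\<lambda>i. a * K i + b * K' i) \<omega>1 \<omega>2 \<psi>
    = a * pc_form N \<tau> \<eta> xt yt X Y K \<omega>1 \<omega>2 \<psi> + b * pc_form N \<tau> \<eta> xt yt X' Y' K' \<omega>1 \<omega>2 \<psi>"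
  unfolding pc_form_def mass_normal_lincomb_left mass_normal_lincomb_right stiffness_lincomb_left
  by (simp add: algebra_simps add_divide_distrib diff_divide_distrib)

lemma pc_form_lincomb_test:
  "pc_form N \<tau> \<eta> xt yt X Y K (\<lambda>i. a * \<omega>1 i + b * \<omega>1' i) (\<lambda>i. a * \<omega>2 i + b * \<omega>2' i) (\<lambda>i. a * \<psi> i + b * \<psi>' i)
    = a * pc_form N \<tau> \<eta> xt yt X Y K \<omega>1 \<omega>2 \<psi> + b * pc_form N \<tau> \<eta> xt yt X Y K \<omega>1' \<omega>2' \<psi>'"
  unfolding pc_form_def mass_normal_lincomb_left mass_normal_lincomb_right stiffness_lincomb_right
  by (simp add: algebra_simps add_divide_distrib diff_divide_distrib)

lemma pc_load_lincomb:
  "pc_load N \<tau> \<eta> \<sigma> xt yt xm ym km (\<lambda>i. a * \<omega>1 i + b * \<omega>1' i) (\<lambda>i. a * \<omega>2 i + b * \<omega>2' i) (\<lambda>i. a * \<psi> i + b * \<psi>' i)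
    = a * pc_load N \<tau> \<eta> \<sigma> xt yt xm ym km \<omega>1 \<omega>2 \<psi> + b * pc_load N \<tau> \<eta> \<sigma> xt yt xm ym km \<omega>1' \<omega>2' \<psi>'"
  unfolding pc_load_def mass_normal_lincomb_left mass_normal_lincomb_right stiffness_lincomb_right
  by (simp add: algebra_simps add_divide_distrib diff_divide_distrib)

lemma pc_zjb_motion_residual:
  "ip_lump N xt yt (\<lambda>j k. ((xn k - xm k) / \<tau> * nrm1 xt yt j + (yn k - ym k) / \<tau> * nrm2 xt yt j) * \<psi> k)
     + ip_pc N xt yt (\<lambda>j. ds xt yt (\<lambda>i. (kn i + km i) / 2) j * ds xt yt \<psi> j)
   = pc_form N \<tau> \<eta> xt yt xn yn kn (\<lambda>_. 0) (\<lambda>_. 0) \<psi> - pc_load N \<tau> \<eta> \<sigma> xt yt xm ym km (\<lambda>_. 0) (\<lambda>_. 0) \<psi>"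
proof -
  have x: "(\<lambda>i. (xn i - xm i) / \<tau>) = (\<lambda>i. 1 / \<tau> * xn i + - 1 / \<tau> * xm i)"
   and y: "(\<lambda>i. (yn i - ym i) / \<tau>) = (\<lambda>i. 1 / \<tau> * yn i + - 1 / \<tau> * ym i)"
   and k: "(\<lambda>i. (kn i + km i) / 2) = (\<lambda>i. 1 / 2 * kn i + 1 / 2 * km i)"
    by (simp_all add: fun_eq_iff diff_divide_distrib add_divide_distrib)
  have "ip_lump N xt yt (\<lambda>j k. ((xn k - xm k) / \<tau> * nrm1 xt yt j + (yn k - ym k) / \<tau> * nrm2 xt yt j) * \<psi> k)
     + ip_pc N xt yt (\<lambda>j. ds xt yt (\<lambda>i. (kn i + km i) / 2) j * ds xt yt \<psi> j)
    = mass_normal N xt yt (\<lambda>i. (xn i - xm i) / \<tau>) (\<lambda>i. (yn i - ym i) / \<tau>) \<psi>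
     + stiffness N xt yt (\<lambda>i. (kn i + km i) / 2) \<psi>"
    by (simp only: mass_normal_def stiffness_def)
  also have "\<dots> = pc_form N \<tau> \<eta> xt yt xn yn kn (\<lambda>_. 0) (\<lambda>_. 0) \<psi> - pc_load N \<tau> \<eta> \<sigma> xt yt xm ym km (\<lambda>_. 0) (\<lambda>_. 0) \<psi>"
    unfolding x y k mass_normal_lincomb_left stiffness_lincomb_left pc_form_def pc_load_def
    by simp
  finally show ?thesis .
qed

lemma pc_zjb_curvature_residual:
  "ip_lump N xt yt (\<lambda>j k. (kn k + km k) / 2 * (nrm1 xt yt j * \<omega>1 k + nrm2 xt yt j * \<omega>2 k))
     - ip_pc N xt yt (\<lambda>j. ds xt yt (\<lambda>i. (xn i + xm i) / 2) j * ds xt yt \<omega>1 j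
                        + ds xt yt (\<lambda>i. (yn i + ym i) / 2) j * ds xt yt \<omega>2 j)
     + \<sigma> * (\<omega>1 N - \<omega>1 0)
     - 1 / (\<eta> * \<tau>) * ((xn 0 - xm 0) * \<omega>1 0 + (xn N - xm N) * \<omega>1 N)
   = pc_form N \<tau> \<eta> xt yt xn yn kn \<omega>1 \<omega>2 (\<lambda>_. 0) - pc_load N \<tau> \<eta> \<sigma> xt yt xm ym km \<omega>1 \<omega>2 (\<lambda>_. 0)"
proof -
  have x: "(\<lambda>i. (xn i + xm i) / 2) = (\<lambda>i. 1 / 2 * xn i + 1 / 2 * xm i)"
   and y: "(\<lambda>i. (yn i + ym i) / 2) = (\<lambda>i. 1 / 2 * yn i + 1 / 2 * ym i)"
   and k: "(\<lambda>i. (kn i + km i) / 2) = (\<lambda>i. 1 / 2 * kn i + 1 / 2 * km i)"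
    by (simp_all add: fun_eq_iff add_divide_distrib)
  have "ip_lump N xt yt (\<lambda>j k. (kn k + km k) / 2 * (nrm1 xt yt j * \<omega>1 k + nrm2 xt yt j * \<omega>2 k))
      = mass_normal N xt yt \<omega>1 \<omega>2 (\<lambda>i. (kn i + km i) / 2)"
    by (simp add: mass_normal_def algebra_simps)
  moreover have "ip_pc N xt yt (\<lambda>j. ds xt yt (\<lambda>i. (xn i + xm i) / 2) j * ds xt yt \<omega>1 j
                        + ds xt yt (\<lambda>i. (yn i + ym i) / 2) j * ds xt yt \<omega>2 j)
      = stiffness N xt yt (\<lambda>i. (xn i + xm i) / 2) \<omega>1 + stiffness N xt yt (\<lambda>i. (yn i + ym i) / 2) \<omega>2"
    by (simp add: stiffness_def ip_pc_def sum.distrib distrib_right)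
  ultimately show ?thesis
    unfolding x y k mass_normal_lincomb_right stiffness_lincomb_left pc_form_def pc_load_def
    by (simp add: algebra_simps add_divide_distrib diff_divide_distrib)
qed

lemma pc_zjb_iff_weak_form:
  "pc_zjb N \<tau> \<eta> \<sigma> xm ym km xt yt xn yn kn \<longleftrightarrow>
     (xn, yn) \<in> Xh N \<and> kn \<in> Kh N \<and>
     (\<forall>\<omega>1 \<omega>2 \<psi>. (\<omega>1, \<omega>2) \<in> Xh N \<longrightarrow> \<psi> \<in> Kh N \<longrightarrow>
        pc_form N \<tau> \<eta> xt yt xn yn kn \<omega>1 \<omega>2 \<psi> = pc_load N \<tau> \<eta> \<sigma> xt yt xm ym km \<omega>1 \<omega>2 \<psi>)"
proof -
  define r where "r \<omega>1 \<omega>2 \<psi> =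
    pc_form N \<tau> \<eta> xt yt xn yn kn \<omega>1 \<omega>2 \<psi> - pc_load N \<tau> \<eta> \<sigma> xt yt xm ym km \<omega>1 \<omega>2 \<psi>" for \<omega>1 \<omega>2 \<psi>
  have split: "r \<omega>1 \<omega>2 \<psi> = r \<omega>1 \<omega>2 (\<lambda>_. 0) + r (\<lambda>_. 0) (\<lambda>_. 0) \<psi>" for \<omega>1 \<omega>2 \<psi>
    by (simp add: r_def pc_form_def pc_load_def)
  have zero: "(\<lambda>_. 0) \<in> Kh N" "((\<lambda>_. 0), (\<lambda>_. 0)) \<in> Xh N"
    by (simp_all add: Xh_def Kh0_def Kh_def)
  have "(\<forall>\<psi>\<in>Kh N. r (\<lambda>_. 0) (\<lambda>_. 0) \<psi> = 0) \<and> (\<forall>\<omega>1 \<omega>2. (\<omega>1, \<omega>2) \<in> Xh N \<longrightarrow> r \<omega>1 \<omega>2 (\<lambda>_. 0) = 0)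
    \<longleftrightarrow> (\<forall>\<omega>1 \<omega>2 \<psi>. (\<omega>1, \<omega>2) \<in> Xh N \<longrightarrow> \<psi> \<in> Kh N \<longrightarrow> r \<omega>1 \<omega>2 \<psi> = 0)"
    using split zero by metis
  then show ?thesis
    unfolding pc_zjb_def pc_zjb_motion_residual[where \<eta> = \<eta> and \<sigma> = \<sigma>] pc_zjb_curvature_residual
    by (simp add: r_def)
qed

lemma pc_form_energy:
  assumes "\<tau> \<noteq> 0"
  shows "\<tau> * pc_form N \<tau> \<eta> xt yt X Y K (\<lambda>_. 0) (\<lambda>_. 0) K - 2 * pc_form N \<tau> \<eta> xt yt X Y K X Y (\<lambda>_. 0)
    = \<tau> / 2 * stiffness N xt yt K K + stiffness N xt yt X X + stiffness N xt yt Y Y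
      + 2 * ((X 0)\<^sup>2 + (X N)\<^sup>2) / (\<eta> * \<tau>)"
  using assms by (simp add: pc_form_def field_simps power2_eq_square)

lemma pc_form_kernel_energy:
  assumes "\<tau> > 0" "\<eta> > 0"
    and seg: "\<And>j. j \<in> {1..N} \<Longrightarrow> seglen xt yt j > 0"
    and XY: "(X, Y) \<in> Xh N" and K: "K \<in> Kh N"
    and kernel: "\<And>\<omega>1 \<omega>2 \<psi>. (\<omega>1, \<omega>2) \<in> Xh N \<Longrightarrow> \<psi> \<in> Kh N \<Longrightarrow> pc_form N \<tau> \<eta> xt yt X Y K \<omega>1 \<omega>2 \<psi> = 0"
  shows "X = (\<lambda>_. 0)" "Y = (\<lambda>_. 0)" "\<And>j. j \<le> N \<Longrightarrow> K j = K 0"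
proof -
  have "(\<lambda>_. 0) \<in> Kh N" "((\<lambda>_. 0), (\<lambda>_. 0)) \<in> Xh N"
    by (simp_all add: Xh_def Kh0_def Kh_def)
  then have energy: "\<tau> / 2 * stiffness N xt yt K K + stiffness N xt yt X X + stiffness N xt yt Y Y
      + 2 * ((X 0)\<^sup>2 + (X N)\<^sup>2) / (\<eta> * \<tau>) = 0"
    using pc_form_energy[of \<tau> N \<eta> xt yt X Y K] kernel XY K \<open>\<tau> > 0\<close> by simp
  have "\<tau> / 2 * stiffness N xt yt K K \<ge> 0" "2 * ((X 0)\<^sup>2 + (X N)\<^sup>2) / (\<eta> * \<tau>) \<ge> 0"
    using assms(1,2) stiffness_self_nonneg by simp_all
  with energy stiffness_self_nonneg[of N xt yt X] stiffness_self_nonneg[of N xt yt Y]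
  have "\<tau> / 2 * stiffness N xt yt K K = 0" "stiffness N xt yt X X = 0" "stiffness N xt yt Y Y = 0"
    and "2 * ((X 0)\<^sup>2 + (X N)\<^sup>2) / (\<eta> * \<tau>) = 0"
    by linarith+
  with assms(1,2) have "stiffness N xt yt K K = 0" "X 0 = 0"
    by (simp_all add: add_nonneg_eq_0_iff)
  have X_const: "X j = X 0" if "j \<le> N" for j
    by (rule stiffness_self_eq_0_imp_const[OF seg \<open>stiffness N xt yt X X = 0\<close> that])
  have Y_const: "Y j = Y 0" if "j \<le> N" for j
    by (rule stiffness_self_eq_0_imp_const[OF seg \<open>stiffness N xt yt Y Y = 0\<close> that])
  have K_const: "K j = K 0" if "j \<le> N" for j
    by (rule stiffness_self_eq_0_imp_const[OF seg \<open>stiffness N xt yt K K = 0\<close> that])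
  show "X = (\<lambda>_. 0)"
  proof
    fix j
    show "X j = 0"
      using XY X_const[of j] \<open>X 0 = 0\<close> by (cases "j \<le> N") (auto simp: Xh_def Kh_def)
  qed
  show "Y = (\<lambda>_. 0)"
  proof
    fix j
    show "Y j = 0"
      using XY Y_const[of j] by (cases "j \<le> N") (auto simp: Xh_def Kh0_def Kh_def)
  qed
  show "K j = K 0" if "j \<le> N" for j
    using K_const that .
qed

lemma pc_form_nondegenerate:
  assumes N: "N \<ge> 1" and "\<tau> > 0" "\<eta> > 0"
    and seg: "\<And>j. j \<in> {1..N} \<Longrightarrow> seglen xt yt j > 0"
    and nrm: "(nrm1 xt yt 1)\<^sup>2 + (nrm1 xt yt N)\<^sup>2 > 0"
    and XY: "(X, Y) \<in> Xh N" and K: "K \<in> Kh N"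
    and kernel: "\<And>\<omega>1 \<omega>2 \<psi>. (\<omega>1, \<omega>2) \<in> Xh N \<Longrightarrow> \<psi> \<in> Kh N \<Longrightarrow> pc_form N \<tau> \<eta> xt yt X Y K \<omega>1 \<omega>2 \<psi> = 0"
  shows "X = (\<lambda>_. 0) \<and> Y = (\<lambda>_. 0) \<and> K = (\<lambda>_. 0)"
proof -
  note energy = pc_form_kernel_energy[OF assms(2,3) seg XY K kernel]
  have hat_test: "mass_normal N xt yt (hat j) (\<lambda>_. 0) K = 0" if "j \<le> N" for j
  proof -
    have "(hat j, (\<lambda>_. 0)) \<in> Xh N" "(\<lambda>_. 0) \<in> Kh N"
      using hat_in_Kh[OF that] by (simp_all add: Xh_def Kh0_def Kh_def)
    then have "pc_form N \<tau> \<eta> xt yt X Y K (hat j) (\<lambda>_. 0) (\<lambda>_. 0) = 0"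
      by (rule kernel)
    then show ?thesis
      using energy(1,2) by (simp add: pc_form_def)
  qed
  have "seglen xt yt 1 * nrm1 xt yt 1 * K 0 = 0"
    using hat_test[of 0] mass_normal_hat_first[OF N, of xt yt K] by simp
  moreover have "seglen xt yt N * nrm1 xt yt N * K N = 0"
    using hat_test[of N] mass_normal_hat_last[OF N, of xt yt K] by simp
  ultimately have "nrm1 xt yt 1 = 0 \<or> K 0 = 0" "nrm1 xt yt N = 0 \<or> K 0 = 0"
    using seg[of 1] seg[of N] N energy(3)[of N] by simp_all
  moreover have "nrm1 xt yt 1 \<noteq> 0 \<or> nrm1 xt yt N \<noteq> 0"
    using nrm by auto
  ultimately have "K 0 = 0" by blast
  have "K = (\<lambda>_. 0)"
  proof
    fix j
    show "K j = 0"
      using K energy(3)[of j] \<open>K 0 = 0\<close> by (cases "j \<le> N") (auto simp: Kh_def)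
  qed
  with energy(1,2) show ?thesis by blast
qed

text \<open>
  Coordinates of \<open>X\<^sup>h \<times> K\<^sup>h\<close>: nodes \<open>0..N\<close> hold \<open>X\<close>, \<open>N+1..2N+1\<close> hold \<open>K\<close>, and \<open>2N+2..3N\<close>
  hold the interior values of \<open>Y\<close>, which vanishes at both end points.
\<close>

definition pack :: "nat \<Rightarrow> (nat \<Rightarrow> real) \<Rightarrow> (nat \<Rightarrow> real) \<Rightarrow> (nat \<Rightarrow> real) \<Rightarrow> nat \<Rightarrow> real"
  where "pack N X Y K j =
    (if j \<le> N then X j
     else if j \<le> 2 * N + 1 then K (j - (N + 1))
     else if j \<le> 3 * N then Y (j - (2 * N + 1)) else 0)"

definition unpack_x :: "nat \<Rightarrow> (nat \<Rightarrow> real) \<Rightarrow> nat \<Rightarrow> real"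
  where "unpack_x N u i = (if i \<le> N then u i else 0)"

definition unpack_y :: "nat \<Rightarrow> (nat \<Rightarrow> real) \<Rightarrow> nat \<Rightarrow> real"
  where "unpack_y N u i = (if 0 < i \<and> i < N then u (2 * N + 1 + i) else 0)"

definition unpack_k :: "nat \<Rightarrow> (nat \<Rightarrow> real) \<Rightarrow> nat \<Rightarrow> real"
  where "unpack_k N u i = (if i \<le> N then u (N + 1 + i) else 0)"

lemma unpack_in_Xh: "(unpack_x N u, unpack_y N u) \<in> Xh N" "unpack_k N u \<in> Kh N"
  by (simp_all add: Xh_def Kh0_def Kh_def unpack_x_def unpack_y_def unpack_k_def)

lemma pack_in_Kh: "N \<ge> 1 \<Longrightarrow> pack N X Y K \<in> Kh (3 * N)"
  by (simp add: Kh_def pack_def)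

lemma unpack_pack:
  assumes "(X, Y) \<in> Xh N" "K \<in> Kh N"
  shows "unpack_x N (pack N X Y K) = X" "unpack_y N (pack N X Y K) = Y" "unpack_k N (pack N X Y K) = K"
proof -
  have "Y i = 0" if "\<not> (0 < i \<and> i < N)" for i
    using assms(1) that by (cases "i = 0 \<or> i = N") (auto simp: Xh_def Kh0_def Kh_def)
  with assms show "unpack_x N (pack N X Y K) = X" "unpack_y N (pack N X Y K) = Y" "unpack_k N (pack N X Y K) = K"
    by (auto simp: fun_eq_iff Xh_def Kh_def pack_def unpack_x_def unpack_y_def unpack_k_def)
qed

lemma pack_unpack:
  assumes "N \<ge> 1" "u \<in> Kh (3 * N)"
  shows "pack N (unpack_x N u) (unpack_y N u) (unpack_k N u) = u"
  using assms by (auto simp: fun_eq_iff Kh_def pack_def unpack_x_def unpack_y_def unpack_k_def)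

lemma unpack_lincomb:
  "unpack_x N (\<lambda>i. a * u i + b * v i) = (\<lambda>i. a * unpack_x N u i + b * unpack_x N v i)"
  "unpack_y N (\<lambda>i. a * u i + b * v i) = (\<lambda>i. a * unpack_y N u i + b * unpack_y N v i)"
  "unpack_k N (\<lambda>i. a * u i + b * v i) = (\<lambda>i. a * unpack_k N u i + b * unpack_k N v i)"
  by (simp_all add: fun_eq_iff unpack_x_def unpack_y_def unpack_k_def)

lemma all_Xh_Kh_iff_all_packed:
  assumes "N \<ge> 1"
  shows "(\<forall>\<omega>1 \<omega>2 \<psi>. (\<omega>1, \<omega>2) \<in> Xh N \<longrightarrow> \<psi> \<in> Kh N \<longrightarrow> P \<omega>1 \<omega>2 \<psi>)
    \<longleftrightarrow> (\<forall>v \<in> Kh (3 * N). P (unpack_x N v) (unpack_y N v) (unpack_k N v))"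
  using unpack_in_Xh pack_in_Kh[OF assms] unpack_pack by metis

lemma ex1_Xh_Kh_if_ex1_packed:
  assumes N: "N \<ge> 1"
    and "\<exists>!u. u \<in> Kh (3 * N) \<and> Q (unpack_x N u) (unpack_y N u) (unpack_k N u)"
  shows "\<exists>!(X, Y, K). (X, Y) \<in> Xh N \<and> K \<in> Kh N \<and> Q X Y K"
proof -
  obtain u where u: "u \<in> Kh (3 * N)" "Q (unpack_x N u) (unpack_y N u) (unpack_k N u)"
    and u_unique: "\<And>u'. u' \<in> Kh (3 * N) \<Longrightarrow> Q (unpack_x N u') (unpack_y N u') (unpack_k N u') \<Longrightarrow> u' = u"
    using assms(2) by blast
  have unique: "(X, Y, K) = (unpack_x N u, unpack_y N u, unpack_k N u)"
    if mem: "(X, Y) \<in> Xh N" "K \<in> Kh N" and "Q X Y K" for X Y K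
  proof -
    have "pack N X Y K = u"
      using that by (intro u_unique pack_in_Kh[OF N]) (simp add: unpack_pack[OF mem])
    then show ?thesis
      using unpack_pack[OF mem] by auto
  qed
  show ?thesis
  proof (rule ex1I[where a = "(unpack_x N u, unpack_y N u, unpack_k N u)"])
    show "case (unpack_x N u, unpack_y N u, unpack_k N u) of
        (X, Y, K) \<Rightarrow> (X, Y) \<in> Xh N \<and> K \<in> Kh N \<and> Q X Y K"
      using unpack_in_Xh u(2) by simp
  next
    fix p
    assume p_solves: "case p of (X, Y, K) \<Rightarrow> (X, Y) \<in> Xh N \<and> K \<in> Kh N \<and> Q X Y K"
    obtain X Y K where p: "p = (X, Y, K)"
      by (cases p)
    show "p = (unpack_x N u, unpack_y N u, unpack_k N u)"
      using p_solves unique[of X Y K] by (simp add: p)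
  qed
qed

lemma pc_weak_form_well_posed:
  assumes N: "N \<ge> 1" and "\<tau> > 0" "\<eta> > 0"
    and "\<And>j. j \<in> {1..N} \<Longrightarrow> seglen xt yt j > 0"
    and "(nrm1 xt yt 1)\<^sup>2 + (nrm1 xt yt N)\<^sup>2 > 0"
  shows "\<exists>!(X, Y, K). (X, Y) \<in> Xh N \<and> K \<in> Kh N \<and>
    (\<forall>\<omega>1 \<omega>2 \<psi>. (\<omega>1, \<omega>2) \<in> Xh N \<longrightarrow> \<psi> \<in> Kh N \<longrightarrow>
       pc_form N \<tau> \<eta> xt yt X Y K \<omega>1 \<omega>2 \<psi> = pc_load N \<tau> \<eta> \<sigma> xt yt xm ym km \<omega>1 \<omega>2 \<psi>)"
proof (rule ex1_Xh_Kh_if_ex1_packed[OF N], unfold all_Xh_Kh_iff_all_packed[OF N],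
    rule nondegenerate_bilinear_system_unique_solvable)
  show "linear_functional (\<lambda>u. pc_form N \<tau> \<eta> xt yt (unpack_x N u) (unpack_y N u) (unpack_k N u)
      (unpack_x N v) (unpack_y N v) (unpack_k N v))" for v
    by (simp add: linear_functional_def unpack_lincomb pc_form_lincomb_unknown)
  show "linear_functional (\<lambda>v. pc_form N \<tau> \<eta> xt yt (unpack_x N u) (unpack_y N u) (unpack_k N u)
      (unpack_x N v) (unpack_y N v) (unpack_k N v))" for u
    by (simp add: linear_functional_def unpack_lincomb pc_form_lincomb_test)
  show "linear_functional (\<lambda>v. pc_load N \<tau> \<eta> \<sigma> xt yt xm ym km (unpack_x N v) (unpack_y N v) (unpack_k N v))"
    by (simp add: linear_functional_def unpack_lincomb pc_load_lincomb)
next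
  fix u
  assume u: "u \<in> Kh (3 * N)"
    and kernel: "\<And>v. v \<in> Kh (3 * N) \<Longrightarrow> pc_form N \<tau> \<eta> xt yt (unpack_x N u) (unpack_y N u) (unpack_k N u)
      (unpack_x N v) (unpack_y N v) (unpack_k N v) = 0"
  have "\<forall>\<omega>1 \<omega>2 \<psi>. (\<omega>1, \<omega>2) \<in> Xh N \<longrightarrow> \<psi> \<in> Kh N \<longrightarrow>
      pc_form N \<tau> \<eta> xt yt (unpack_x N u) (unpack_y N u) (unpack_k N u) \<omega>1 \<omega>2 \<psi> = 0"
    unfolding all_Xh_Kh_iff_all_packed[OF N] using kernel by blast
  then have "unpack_x N u = (\<lambda>_. 0) \<and> unpack_y N u = (\<lambda>_. 0) \<and> unpack_k N u = (\<lambda>_. 0)"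
    using pc_form_nondegenerate[OF assms unpack_in_Xh] by blast
  then have "u = pack N (\<lambda>_. 0) (\<lambda>_. 0) (\<lambda>_. 0)"
    using pack_unpack[OF N u] by simp
  then show "u = (\<lambda>_. 0)"
    by (simp add: pack_def fun_eq_iff)
qed

theorem theorem3p1:
  fixes N :: nat and \<tau> \<eta> \<sigma> :: real
    and xm ym km xt yt :: "nat \<Rightarrow> real"
  assumes "N \<ge> 3" and "\<tau> > 0" and "\<eta> > 0"
    and "(xm, ym) \<in> Xh N" and "km \<in> Kh N"
    and "\<exists>kt. zjb_step N (\<tau> / 2) \<eta> \<sigma> xm ym xt yt kt"
    and "(nrm1 xt yt 1)^2 + (nrm1 xt yt N)^2 > 0"
    and "Min ((\<lambda>j. seglen xt yt j) ` {1..N}) > 0"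
  shows "\<exists>!(xn, yn, kn). pc_zjb N \<tau> \<eta> \<sigma> xm ym km xt yt xn yn kn"
proof -
  have "seglen xt yt j > 0" if "j \<in> {1..N}" for j
  proof -
    have "Min ((\<lambda>j. seglen xt yt j) ` {1..N}) \<le> seglen xt yt j"
      using that by (intro Min_le) auto
    with assms(8) show ?thesis by linarith
  qed
  \<comment> \<open>Only (i), (ii), \<open>\<tau>, \<eta> > 0\<close> and \<open>N \<ge> 1\<close> are needed: neither the data \<open>X\<^sup>m, \<kappa>\<^sup>m\<close> nor the
      way the predicted curve was computed enter the argument.\<close>
  then show ?thesis
    unfolding pc_zjb_iff_weak_form
    using pc_weak_form_well_posed[of N \<tau> \<eta> xt yt] assms(1-3,7) by simp
qed

end
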